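(* Let $A,Y$ take values in $\{-1,1\}$. Scenario I: $\Pr\{A=1\}=1/2$; $X_1=A$; $\Pr\{Y=y\mid A=a\}=\frac{1}{1+\exp(-2ay)}$; $X_2=Y+N$ where $N\sim\mathcal{N}(0,1)$ is independent of $(A,Y)$; and $R^*=X_1+X_2=A+X_2$, $\tilde R=X_2$. Scenario II: $\Pr\{A=1\}=1/2$; conditional on $A=a$, $X_3$ is a mixture of $\mathcal{N}(a+1,1)$ with weight $\frac{1}{1+\exp(-2a)}$ and $\mathcal{N}(a-1,1)$ with weight $\frac{1}{1+\exp(2a)}$; conditional on $X_3=x_3$ (and $A$), $\Pr\{Y=y\mid X_3=x_3\}=\frac{1}{1+\exp(-2yx_3)}$, so that $Y$ is independent of $A$ given $X_3$; and $R^*=X_3$, $\tilde R=X_3-A$. Then the joint distributions of $(Y,A,R^*,\tilde R)$ are identical in the two scenarios. Moreover, in each scenario $R^*$ and $\tilde R$ are optimal unconstrained and equalized odds scores respectively, in that their ROC curves are optimal and, for any loss function, an optimal unconstrained classifier (among all possibly randomized classifiers based on the scenario's features and $A$) can be derived from $R^*$ by thresholding, and an optimal equalized odds classifier (among all such classifiers satisfying equalized odds) can be derived from $\tilde R$ by thresholding.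
   Context: A score or predictor $S$ satisfies equalized odds with respect to $A$ and $Y$ if $S$ and $A$ are independent conditional on $Y$. Thresholding a score $S$ means using the classifier $\mathbb{I}\{S>t\}$ for some threshold $t$. The features of Scenario I are $(X_1,X_2)$ and of Scenario II is $X_3$. *)

theory Defs
  imports "HOL-Probability.Probability"
begin

text \<open>Binary labels and protected attribute take values in {-1,1} (as reals).
A randomized classifier based on features F (which include A) is represented by
the (measurable, [0,1]-valued) probability g = h o F that it predicts 1.\<close>

definition rand_clf :: "'a measure \<Rightarrow> ('a \<Rightarrow> 'f::topological_space) \<Rightarrow> ('a \<Rightarrow> real) \<Rightarrow> bool" where
  "rand_clf M F g \<longleftrightarrow>
     (\<exists>h \<in> borel_measurable borel. (\<forall>z. 0 \<le> h z \<and> h z \<le> 1) \<and> (\<forall>\<omega>\<in>space M. g \<omega> = h (F \<omega>)))"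

definition thresh :: "('a \<Rightarrow> real) \<Rightarrow> ereal \<Rightarrow> 'a \<Rightarrow> real" where
  "thresh S t = (\<lambda>\<omega>. if t < ereal (S \<omega>) then 1 else 0)"

definition grp_rate :: "'a measure \<Rightarrow> ('a \<Rightarrow> real) \<Rightarrow> ('a \<Rightarrow> real) \<Rightarrow> ('a \<Rightarrow> real) \<Rightarrow> real \<Rightarrow> real \<Rightarrow> real" where
  "grp_rate M Y A g y a =
     (\<integral>\<omega>. g \<omega> * indicator {\<omega>\<in>space M. Y \<omega> = y \<and> A \<omega> = a} \<omega> \<partial>M)
       / measure M {\<omega>\<in>space M. Y \<omega> = y \<and> A \<omega> = a}"

definition rate :: "'a measure \<Rightarrow> ('a \<Rightarrow> real) \<Rightarrow> ('a \<Rightarrow> real) \<Rightarrow> real \<Rightarrow> real" where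
  "rate M Y g y =
     (\<integral>\<omega>. g \<omega> * indicator {\<omega>\<in>space M. Y \<omega> = y} \<omega> \<partial>M) / measure M {\<omega>\<in>space M. Y \<omega> = y}"

definition tpr :: "'a measure \<Rightarrow> ('a \<Rightarrow> real) \<Rightarrow> ('a \<Rightarrow> real) \<Rightarrow> real" where
  "tpr M Y g = rate M Y g 1"

definition fpr :: "'a measure \<Rightarrow> ('a \<Rightarrow> real) \<Rightarrow> ('a \<Rightarrow> real) \<Rightarrow> real" where
  "fpr M Y g = rate M Y g (-1)"

definition eo_clf :: "'a measure \<Rightarrow> ('a \<Rightarrow> real) \<Rightarrow> ('a \<Rightarrow> real) \<Rightarrow> ('a \<Rightarrow> real) \<Rightarrow> bool" where
  "eo_clf M Y A g \<longleftrightarrow> (\<forall>y\<in>{-1,1}. grp_rate M Y A g y 1 = grp_rate M Y A g y (-1))"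

definition eo_score :: "'a measure \<Rightarrow> ('a \<Rightarrow> real) \<Rightarrow> ('a \<Rightarrow> real) \<Rightarrow> ('a \<Rightarrow> real) \<Rightarrow> bool" where
  "eo_score M Y A S \<longleftrightarrow>
     (\<forall>y\<in>{-1,1}. \<forall>a\<in>{-1,1}. \<forall>B\<in>sets borel.
        measure M {\<omega>\<in>space M. S \<omega> \<in> B \<and> A \<omega> = a \<and> Y \<omega> = y} * measure M {\<omega>\<in>space M. Y \<omega> = y}
        = measure M {\<omega>\<in>space M. S \<omega> \<in> B \<and> Y \<omega> = y} * measure M {\<omega>\<in>space M. A \<omega> = a \<and> Y \<omega> = y})"

text \<open>Expected loss E[l(Yhat, Y)] of a randomized classifier g; l takes (prediction, label).\<close>
definition exp_loss :: "'a measure \<Rightarrow> ('a \<Rightarrow> real) \<Rightarrow> (real \<Rightarrow> real \<Rightarrow> real) \<Rightarrow> ('a \<Rightarrow> real) \<Rightarrow> real" where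
  "exp_loss M Y l g = (\<integral>\<omega>. g \<omega> * l 1 (Y \<omega>) + (1 - g \<omega>) * l (-1) (Y \<omega>) \<partial>M)"

definition loss_fn :: "(real \<Rightarrow> real \<Rightarrow> real) \<Rightarrow> bool" where
  "loss_fn l \<longleftrightarrow> l 1 1 \<le> l (-1) 1 \<and> l (-1) (-1) \<le> l 1 (-1)"

definition opt_unconstrained_score ::
  "'a measure \<Rightarrow> ('a \<Rightarrow> real) \<Rightarrow> ('a \<Rightarrow> 'f::topological_space) \<Rightarrow> ('a \<Rightarrow> real) \<Rightarrow> bool" where
  "opt_unconstrained_score M Y F S \<longleftrightarrow>
     (\<forall>g. rand_clf M F g \<longrightarrow>
        (\<exists>t. fpr M Y (thresh S t) \<le> fpr M Y g \<and> tpr M Y g \<le> tpr M Y (thresh S t))) \<and>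
     (\<forall>l. loss_fn l \<longrightarrow>
        (\<exists>t. \<forall>g. rand_clf M F g \<longrightarrow> exp_loss M Y l (thresh S t) \<le> exp_loss M Y l g))"

definition opt_eo_score ::
  "'a measure \<Rightarrow> ('a \<Rightarrow> real) \<Rightarrow> ('a \<Rightarrow> real) \<Rightarrow> ('a \<Rightarrow> 'f::topological_space) \<Rightarrow> ('a \<Rightarrow> real) \<Rightarrow> bool" where
  "opt_eo_score M Y A F S \<longleftrightarrow>
     eo_score M Y A S \<and>
     (\<forall>g. rand_clf M F g \<and> eo_clf M Y A g \<longrightarrow>
        (\<exists>t. fpr M Y (thresh S t) \<le> fpr M Y g \<and> tpr M Y g \<le> tpr M Y (thresh S t))) \<and>
     (\<forall>l. loss_fn l \<longrightarrow>
        (\<exists>t. eo_clf M Y A (thresh S t) \<and>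
             (\<forall>g. rand_clf M F g \<and> eo_clf M Y A g \<longrightarrow> exp_loss M Y l (thresh S t) \<le> exp_loss M Y l g)))"

end

theory Submission
  imports Defs
begin

text \<open>Both scenarios are instances of one model: \<open>Pr{Y = y, A = a} = 1 / (2 (1 + exp (-2ay)))\<close>, and
  given \<open>Y = y\<close> the residual feature \<open>Z\<close> (\<open>X\<^sub>2\<close> in scenario I, \<open>X\<^sub>3 - A\<close> in scenario II) is
  \<open>N(y,1)\<close> independently of \<open>A\<close>. This fixes the law of \<open>(Y, A, A + Z, Z)\<close>, and every classifier based
  on the features is a \<open>[0,1]\<close>-valued function of \<open>(A, Z)\<close>.
  The likelihood ratio of \<open>Y = 1\<close> against \<open>Y = -1\<close> at \<open>(a, z)\<close> is \<open>exp (2 (a + z))\<close>, so by the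
  Neyman--Pearson lemma thresholds of \<open>A + Z\<close> dominate every classifier. An equalized-odds classifier
  has the same rates in both groups and so competes with classifiers of \<open>Z\<close> alone, whose likelihood ratio
  \<open>exp (2 z)\<close> makes thresholds of \<open>Z\<close> (which satisfy equalized odds) optimal among them. Expected
  losses are affine in the true and false positive rates, and continuity of the Gaussian tails lets the
  thresholds attain every false positive rate, which gives both optimality statements.\<close>

section \<open>Gaussian laws and the label probabilities\<close>

definition gauss :: "real \<Rightarrow> real measure" where
  "gauss m = density lborel (\<lambda>x. ennreal (normal_density m 1 x))"

lemma prob_space_gauss: "prob_space (gauss m)"
  unfolding gauss_def by (rule prob_space_normal_density) simp

lemma real_distribution_gauss: "real_distribution (gauss m)"
  unfolding real_distribution_def real_distribution_axioms_def
  using prob_space_gauss by (simp add: gauss_def)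

lemma sets_gauss [simp, measurable_cong]: "sets (gauss m) = sets borel"
  unfolding gauss_def by simp

lemma space_gauss [simp]: "space (gauss m) = UNIV"
  unfolding gauss_def by simp

lemma measure_gauss_UNIV [simp]: "measure (gauss m) UNIV = 1"
  using prob_space.prob_space[OF prob_space_gauss] by simp

lemma integral_gauss:
  "f \<in> borel_measurable borel \<Longrightarrow> (\<integral>x. f x \<partial>gauss m) = (\<integral>x. normal_density m 1 x * f x \<partial>lborel)"
  unfolding gauss_def by (subst integral_density) auto

lemma integral_gauss_shift:
  assumes "B \<in> sets borel"
  shows "(\<integral>x. normal_density (c + m) 1 x * indicator B (x - c) \<partial>lborel) = measure (gauss m) B"
proof -
  have "(\<integral>x. normal_density (c + m) 1 x * indicator B (x - c) \<partial>lborel)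
      = \<bar>1\<bar> *\<^sub>R (\<integral>x. normal_density (c + m) 1 (c + 1 * x) * indicator B (c + 1 * x - c) \<partial>lborel)"
    by (rule lborel_integral_real_affine) simp
  also have "\<dots> = (\<integral>x. normal_density m 1 x * indicator B x \<partial>lborel)"
    by (simp add: normal_density_def algebra_simps)
  also have "\<dots> = measure (gauss m) B"
    using integral_gauss[of "indicator B" m] assms by simp
  finally show ?thesis .
qed

lemma normal_density_ratio:
  "normal_density (m + 1) 1 x = normal_density (m - 1) 1 x * exp (2 * (x - m))"
proof -
  have "- (x - (m + 1))\<^sup>2 / 2 = - (x - (m - 1))\<^sup>2 / 2 + 2 * (x - m)"
    by (simp add: power2_eq_square field_simps)
  then show ?thesis
    unfolding normal_density_def by (simp add: exp_add[symmetric])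
qed

lemma logistic_sum: "1 / (1 + exp (- x)) + 1 / (1 + exp x) = (1::real)"
proof -
  have "0 < 1 + exp x" by (simp add: add_pos_pos)
  then show ?thesis by (simp add: exp_minus field_simps)
qed

definition cell_prob :: "real \<Rightarrow> real \<Rightarrow> real" where
  "cell_prob y a = 1 / (1 + exp (-2*a*y)) / 2"

lemma cell_prob_pos: "0 < cell_prob y a"
  unfolding cell_prob_def by (simp add: add_pos_pos)

lemma cell_prob_sum: "cell_prob y 1 + cell_prob y (-1) = 1/2"
proof -
  have p: "cell_prob y 1 = 1 / (1 + exp (- (2*y))) / 2" and m: "cell_prob y (-1) = 1 / (1 + exp (2*y)) / 2"
    by (simp_all add: cell_prob_def)
  show ?thesis
    unfolding p m add_divide_distrib[symmetric] logistic_sum by simp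
qed

lemma cell_prob_ratio: "cell_prob 1 a = exp (2*a) * cell_prob (-1) a"
proof -
  have "0 < exp (2*a)" by simp
  then show ?thesis
    unfolding cell_prob_def by (simp add: exp_minus field_simps)
qed

lemma (in prob_space) integral_on_event_law:
  fixes S :: "'a set" and X :: "'a \<Rightarrow> real" and \<mu> :: "real measure"
  assumes S[measurable]: "S \<in> events" and X[measurable]: "X \<in> borel_measurable M"
    and \<mu>: "finite_measure \<mu>" "sets \<mu> = sets borel" and c: "0 \<le> c"
    and law: "\<And>B. B \<in> sets borel \<Longrightarrow> prob {\<omega>\<in>space M. \<omega> \<in> S \<and> X \<omega> \<in> B} = c * measure \<mu> B"
    and f[measurable]: "f \<in> borel_measurable borel"
  shows "(\<integral>\<omega>. indicator S \<omega> * f (X \<omega>) \<partial>M) = c * (\<integral>x. f x \<partial>\<mu>)"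
proof -
  let ?MS = "density M (\<lambda>\<omega>. ennreal (indicator S \<omega> :: real))"
  have law_eq: "distr ?MS borel X = density \<mu> (\<lambda>_. ennreal c)"
  proof (rule measure_eqI)
    fix B assume "B \<in> sets (distr ?MS borel X)"
    then have B[measurable]: "B \<in> sets borel" by simp
    have "emeasure (distr ?MS borel X) B = emeasure ?MS (X -` B \<inter> space M)"
      by (subst emeasure_distr) auto
    also have "\<dots> = emeasure M {\<omega>\<in>space M. \<omega> \<in> S \<and> X \<omega> \<in> B}"
      by (subst emeasure_density) (auto intro!: nn_integral_cong
          simp flip: nn_integral_indicator simp: indicator_def)
    also have "\<dots> = ennreal c * emeasure \<mu> B"
      using \<mu> c by (simp add: emeasure_eq_measure law finite_measure.emeasure_eq_measure ennreal_mult)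
    also have "\<dots> = emeasure (density \<mu> (\<lambda>_. ennreal c)) B"
      using \<mu> B by (subst emeasure_density) (auto simp: nn_integral_cmult_indicator)
    finally show "emeasure (distr ?MS borel X) B = emeasure (density \<mu> (\<lambda>_. ennreal c)) B" .
  qed (use \<mu> in simp)
  have "(\<integral>\<omega>. indicator S \<omega> * f (X \<omega>) \<partial>M) = (\<integral>\<omega>. f (X \<omega>) \<partial>?MS)"
    by (subst integral_density) auto
  also have "\<dots> = (\<integral>x. f x \<partial>distr ?MS borel X)"
    by (subst integral_distr) auto
  also have "\<dots> = (\<integral>x. f x \<partial>density \<mu> (\<lambda>_. ennreal c))"
    by (simp add: law_eq)
  also have "\<dots> = c * (\<integral>x. f x \<partial>\<mu>)"
    using c by (subst integral_density) (auto simp: measurable_cong_sets[OF \<mu>(2) refl])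
  finally show ?thesis .
qed

lemma measure_density_lborel:
  fixes g :: "real \<Rightarrow> real"
  assumes [measurable]: "g \<in> borel_measurable borel" and g: "\<And>x. 0 \<le> g x" "integrable lborel g"
    and [measurable]: "B \<in> sets borel"
  shows "measure (density lborel g) B = (LINT x:B|lborel. g x)"
proof -
  have "integrable lborel (\<lambda>x. g x * indicator B x)"
    using integrable_mult_indicator[of B lborel g] g by (simp add: mult.commute)
  then have "(\<integral>\<^sup>+x. ennreal (g x * indicator B x) \<partial>lborel) = ennreal (\<integral>x. g x * indicator B x \<partial>lborel)"
    using g by (intro nn_integral_eq_integral) auto
  moreover have "emeasure (density lborel g) B = (\<integral>\<^sup>+x. ennreal (g x * indicator B x) \<partial>lborel)"
    by (subst emeasure_density) (auto intro!: nn_integral_cong simp: indicator_def)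
  ultimately show ?thesis
    using g by (simp add: measure_def set_lebesgue_integral_def mult.commute integral_nonneg_AE)
qed

lemma finite_measure_density_lborel:
  fixes g :: "real \<Rightarrow> real"
  assumes [measurable]: "g \<in> borel_measurable borel" and g: "\<And>x. 0 \<le> g x" "integrable lborel g"
  shows "finite_measure (density lborel g)"
proof (rule finite_measureI)
  have "emeasure (density lborel g) (space (density lborel g)) = ennreal (\<integral>x. g x \<partial>lborel)"
    using g by (subst emeasure_density) (auto intro!: nn_integral_eq_integral)
  then show "emeasure (density lborel g) (space (density lborel g)) \<noteq> \<infinity>" by simp
qed

lemma (in prob_space) prob_split_sign:
  fixes X :: "'a \<Rightarrow> real"
  assumes X[measurable]: "X \<in> borel_measurable M" and vals: "\<forall>\<omega>\<in>space M. X \<omega> \<in> {-1,1}"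
    and P[measurable]: "Measurable.pred M P"
  shows "prob {\<omega>\<in>space M. P \<omega>} = prob {\<omega>\<in>space M. X \<omega> = 1 \<and> P \<omega>} + prob {\<omega>\<in>space M. X \<omega> = -1 \<and> P \<omega>}"
proof -
  have "{\<omega>\<in>space M. P \<omega>} = {\<omega>\<in>space M. X \<omega> = 1 \<and> P \<omega>} \<union> {\<omega>\<in>space M. X \<omega> = -1 \<and> P \<omega>}"
    using vals by auto
  also have "prob \<dots> = prob {\<omega>\<in>space M. X \<omega> = 1 \<and> P \<omega>} + prob {\<omega>\<in>space M. X \<omega> = -1 \<and> P \<omega>}"
    by (rule finite_measure_Union) auto
  finally show ?thesis .
qed

lemma (in prob_space) prob_sign_eq_half:
  fixes X :: "'a \<Rightarrow> real"
  assumes X[measurable]: "X \<in> borel_measurable M" and vals: "\<forall>\<omega>\<in>space M. X \<omega> \<in> {-1,1}"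
    and half: "prob {\<omega>\<in>space M. X \<omega> = 1} = 1/2" and a: "a \<in> {-1,1}"
  shows "prob {\<omega>\<in>space M. X \<omega> = a} = 1/2"
  using prob_split_sign[OF X vals, of "\<lambda>_. True"] half a prob_space by auto

section \<open>The common model\<close>

locale gauss_label_model = prob_space M for M :: "'a measure" +
  fixes Y A Z :: "'a \<Rightarrow> real"
  assumes measurable_Y [measurable]: "Y \<in> borel_measurable M"
    and measurable_A [measurable]: "A \<in> borel_measurable M"
    and measurable_Z [measurable]: "Z \<in> borel_measurable M"
    and label_values: "\<forall>\<omega>\<in>space M. Y \<omega> \<in> {-1,1}"
    and group_values: "\<forall>\<omega>\<in>space M. A \<omega> \<in> {-1,1}"
    and joint_law: "\<And>y a B. y \<in> {-1,1} \<Longrightarrow> a \<in> {-1,1} \<Longrightarrow> B \<in> sets borel \<Longrightarrow>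
      prob {\<omega>\<in>space M. Y \<omega> = y \<and> A \<omega> = a \<and> Z \<omega> \<in> B} = cell_prob y a * measure (gauss y) B"
begin

lemma prob_cell:
  "y \<in> {-1,1} \<Longrightarrow> a \<in> {-1,1} \<Longrightarrow> prob {\<omega>\<in>space M. Y \<omega> = y \<and> A \<omega> = a} = cell_prob y a"
  using joint_law[of y a UNIV] by simp

lemma prob_label_Z:
  assumes y: "y \<in> {-1,1}" and B[measurable]: "B \<in> sets borel"
  shows "prob {\<omega>\<in>space M. Y \<omega> = y \<and> Z \<omega> \<in> B} = measure (gauss y) B / 2"
proof -
  have cell: "prob {\<omega>\<in>space M. A \<omega> = a \<and> Y \<omega> = y \<and> Z \<omega> \<in> B} = cell_prob y a * measure (gauss y) B"
    if "a \<in> {-1,1}" for a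
    using joint_law[OF y that B] by (simp add: conj_left_commute)
  have "prob {\<omega>\<in>space M. Y \<omega> = y \<and> Z \<omega> \<in> B}
      = cell_prob y 1 * measure (gauss y) B + cell_prob y (-1) * measure (gauss y) B"
    using prob_split_sign[OF measurable_A group_values, of "\<lambda>\<omega>. Y \<omega> = y \<and> Z \<omega> \<in> B"] by (simp add: cell)
  then show ?thesis
    by (simp only: distrib_right[symmetric] cell_prob_sum)
qed

lemma prob_label: "y \<in> {-1,1} \<Longrightarrow> prob {\<omega>\<in>space M. Y \<omega> = y} = 1/2"
  using prob_label_Z[of y UNIV] by simp

lemma prob_decompose:
  assumes E[measurable]: "E \<in> sets borel"
  shows "prob {\<omega>\<in>space M. (Y \<omega>, A \<omega>, Z \<omega>) \<in> E}
    = (\<Sum>y\<in>{-1,1}. \<Sum>a\<in>{-1,1}. cell_prob y a * measure (gauss y) {z. (y, a, z) \<in> E})"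
proof -
  have cell: "prob {\<omega>\<in>space M. A \<omega> = a \<and> Y \<omega> = y \<and> (Y \<omega>, A \<omega>, Z \<omega>) \<in> E}
      = cell_prob y a * measure (gauss y) {z. (y, a, z) \<in> E}" if "y \<in> {-1,1}" "a \<in> {-1,1}" for y a
  proof -
    have Eya: "{z. (y, a, z) \<in> E} \<in> sets borel" by measurable
    have "{\<omega>\<in>space M. A \<omega> = a \<and> Y \<omega> = y \<and> (Y \<omega>, A \<omega>, Z \<omega>) \<in> E}
        = {\<omega>\<in>space M. Y \<omega> = y \<and> A \<omega> = a \<and> Z \<omega> \<in> {z. (y, a, z) \<in> E}}" by auto
    then show ?thesis using joint_law[OF that Eya] by simp
  qed
  have label: "prob {\<omega>\<in>space M. Y \<omega> = y \<and> (Y \<omega>, A \<omega>, Z \<omega>) \<in> E}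
      = (\<Sum>a\<in>{-1,1}. cell_prob y a * measure (gauss y) {z. (y, a, z) \<in> E})" if "y \<in> {-1,1}" for y
    using prob_split_sign[OF measurable_A group_values, of "\<lambda>\<omega>. Y \<omega> = y \<and> (Y \<omega>, A \<omega>, Z \<omega>) \<in> E"]
      cell[OF that] by simp
  show ?thesis
    using prob_split_sign[OF measurable_Y label_values, of "\<lambda>\<omega>. (Y \<omega>, A \<omega>, Z \<omega>) \<in> E"] label
    by simp
qed

lemma eo_score_Z: "eo_score M Y A Z"
  unfolding eo_score_def
proof (intro ballI)
  fix y a :: real and B :: "real set"
  assume y: "y \<in> {-1,1}" and a: "a \<in> {-1,1}" and B: "B \<in> sets borel"
  have "prob {\<omega>\<in>space M. Z \<omega> \<in> B \<and> A \<omega> = a \<and> Y \<omega> = y} = cell_prob y a * measure (gauss y) B"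
    and "prob {\<omega>\<in>space M. Z \<omega> \<in> B \<and> Y \<omega> = y} = measure (gauss y) B / 2"
    and "prob {\<omega>\<in>space M. A \<omega> = a \<and> Y \<omega> = y} = cell_prob y a"
    using joint_law[OF y a B] prob_label_Z[OF y B] prob_cell[OF y a]
    by (simp_all add: conj_commute conj_left_commute)
  then show "prob {\<omega>\<in>space M. Z \<omega> \<in> B \<and> A \<omega> = a \<and> Y \<omega> = y} * prob {\<omega>\<in>space M. Y \<omega> = y}
      = prob {\<omega>\<in>space M. Z \<omega> \<in> B \<and> Y \<omega> = y} * prob {\<omega>\<in>space M. A \<omega> = a \<and> Y \<omega> = y}"
    by (simp only: prob_label[OF y]) simp
qed

end

lemma distr_eq_of_gauss_label_models:
  assumes "gauss_label_model M Y A Z" and "gauss_label_model M' Y' A' Z'"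
    and f[measurable]: "f \<in> borel \<rightarrow>\<^sub>M N"
  shows "distr M N (\<lambda>\<omega>. f (Y \<omega>, A \<omega>, Z \<omega>)) = distr M' N (\<lambda>\<omega>. f (Y' \<omega>, A' \<omega>, Z' \<omega>))"
proof -
  interpret m: gauss_label_model M Y A Z by fact
  interpret m': gauss_label_model M' Y' A' Z' by fact
  have triple: "distr M borel (\<lambda>\<omega>. (Y \<omega>, A \<omega>, Z \<omega>)) = distr M' borel (\<lambda>\<omega>. (Y' \<omega>, A' \<omega>, Z' \<omega>))"
  proof (rule measure_eqI)
    fix E :: "(real \<times> real \<times> real) set"
    assume "E \<in> sets (distr M borel (\<lambda>\<omega>. (Y \<omega>, A \<omega>, Z \<omega>)))"
    then have E: "E \<in> sets borel" by simp
    have "{\<omega>\<in>space M. (Y \<omega>, A \<omega>, Z \<omega>) \<in> E} = (\<lambda>\<omega>. (Y \<omega>, A \<omega>, Z \<omega>)) -` E \<inter> space M"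
      "{\<omega>\<in>space M'. (Y' \<omega>, A' \<omega>, Z' \<omega>) \<in> E} = (\<lambda>\<omega>. (Y' \<omega>, A' \<omega>, Z' \<omega>)) -` E \<inter> space M'"
      by auto
    then show "emeasure (distr M borel (\<lambda>\<omega>. (Y \<omega>, A \<omega>, Z \<omega>))) E
        = emeasure (distr M' borel (\<lambda>\<omega>. (Y' \<omega>, A' \<omega>, Z' \<omega>))) E"
      using m.prob_decompose[OF E] m'.prob_decompose[OF E] E
      by (simp add: emeasure_distr m.emeasure_eq_measure m'.emeasure_eq_measure)
  qed simp
  have "distr M N (\<lambda>\<omega>. f (Y \<omega>, A \<omega>, Z \<omega>)) = distr (distr M borel (\<lambda>\<omega>. (Y \<omega>, A \<omega>, Z \<omega>))) N f"
    by (subst distr_distr) (auto simp: comp_def)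
  also have "\<dots> = distr M' N (\<lambda>\<omega>. f (Y' \<omega>, A' \<omega>, Z' \<omega>))"
    unfolding triple by (subst distr_distr) (auto simp: comp_def)
  finally show ?thesis .
qed

section \<open>Classifiers as functions of \<open>(A, Z)\<close>\<close>

definition unit_kernel :: "(real \<times> real \<Rightarrow> real) \<Rightarrow> bool" where
  "unit_kernel k \<longleftrightarrow> k \<in> borel_measurable borel \<and> (\<forall>x. 0 \<le> k x \<and> k x \<le> 1)"

text \<open>For the classifier \<open>k (A, Z)\<close>, \<open>cond_rate k a y\<close> is \<open>Pr{Yhat = 1 | Y = y, A = a}\<close> and
  \<open>pos_prob k y\<close> is \<open>Pr{Yhat = 1, Y = y}\<close>.\<close>

definition cond_rate :: "(real \<times> real \<Rightarrow> real) \<Rightarrow> real \<Rightarrow> real \<Rightarrow> real" where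
  "cond_rate k a y = (\<integral>z. k (a, z) \<partial>gauss y)"

definition pos_prob :: "(real \<times> real \<Rightarrow> real) \<Rightarrow> real \<Rightarrow> real" where
  "pos_prob k y = cell_prob y 1 * cond_rate k 1 y + cell_prob y (-1) * cond_rate k (-1) y"

lemma unit_kernel_measurable: "unit_kernel k \<Longrightarrow> k \<in> borel_measurable borel"
  unfolding unit_kernel_def by simp

lemma unit_kernel_slice_measurable:
  assumes "unit_kernel k"
  shows "(\<lambda>z. k (a, z)) \<in> borel_measurable borel"
proof -
  have "(\<lambda>z. (a, z)) \<in> borel_measurable borel"
    by (intro borel_measurable_continuous_onI continuous_intros)
  then show ?thesis
    using assms unfolding unit_kernel_def by (auto intro: measurable_compose)
qed

lemma unit_kernel_bounds: "unit_kernel k \<Longrightarrow> 0 \<le> k x \<and> k x \<le> 1"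
  unfolding unit_kernel_def by blast

lemma integrable_gauss_unit_kernel: "unit_kernel k \<Longrightarrow> integrable (gauss y) (\<lambda>z. k (a, z))"
  using prob_space_gauss[of y] unit_kernel_bounds[of k]
  by (intro finite_measure.integrable_const_bound[where B=1])
    (auto simp: prob_space_def unit_kernel_slice_measurable measurable_cong_sets[OF sets_gauss refl])

lemma cond_rate_bounds:
  assumes k: "unit_kernel k"
  shows "0 \<le> cond_rate k a y \<and> cond_rate k a y \<le> 1"
proof -
  interpret prob_space "gauss y" by (rule prob_space_gauss)
  have "cond_rate k a y \<le> (\<integral>z. 1 \<partial>gauss y)"
    unfolding cond_rate_def using integrable_gauss_unit_kernel[OF k] unit_kernel_bounds[OF k]
    by (intro integral_mono) auto
  moreover have "0 \<le> cond_rate k a y"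
    unfolding cond_rate_def using unit_kernel_bounds[OF k] by (intro integral_nonneg_AE) auto
  ultimately show ?thesis by simp
qed

lemma pos_prob_bounds:
  assumes "unit_kernel k"
  shows "0 \<le> pos_prob k y \<and> 2 * pos_prob k y \<le> 1"
proof -
  note bounds = cond_rate_bounds[OF assms] cell_prob_pos[THEN less_imp_le]
  have "pos_prob k y \<le> cell_prob y 1 + cell_prob y (-1)"
    unfolding pos_prob_def using bounds by (intro add_mono mult_left_le) auto
  moreover have "0 \<le> pos_prob k y"
    unfolding pos_prob_def using bounds by (intro add_nonneg_nonneg mult_nonneg_nonneg) auto
  ultimately show ?thesis using cell_prob_sum[of y] by simp
qed

lemma rand_clf_unit_kernel:
  fixes \<phi> :: "real \<times> real \<Rightarrow> 'f::topological_space"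
  assumes g: "rand_clf M F g" and \<phi>[measurable]: "\<phi> \<in> borel_measurable borel"
    and F: "\<forall>\<omega>\<in>space M. F \<omega> = \<phi> (A \<omega>, Z \<omega>)"
  obtains k where "unit_kernel k" and "\<forall>\<omega>\<in>space M. g \<omega> = k (A \<omega>, Z \<omega>)"
proof -
  obtain h where [measurable]: "h \<in> borel_measurable borel" and "\<forall>z. 0 \<le> h z \<and> h z \<le> 1"
    and "\<forall>\<omega>\<in>space M. g \<omega> = h (F \<omega>)"
    using g unfolding rand_clf_def by blast
  then have "unit_kernel (h \<circ> \<phi>)" and "\<forall>\<omega>\<in>space M. g \<omega> = (h \<circ> \<phi>) (A \<omega>, Z \<omega>)"
    using F unfolding unit_kernel_def by auto
  then show thesis by (rule that)
qed

context gauss_label_model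
begin

lemma integral_unit_kernel_cell:
  assumes k: "unit_kernel k" and y: "y \<in> {-1,1}" and a: "a \<in> {-1,1}"
  shows "(\<integral>\<omega>. k (A \<omega>, Z \<omega>) * indicator {\<omega>\<in>space M. Y \<omega> = y \<and> A \<omega> = a} \<omega> \<partial>M)
    = cell_prob y a * cond_rate k a y"
proof -
  note [measurable] = unit_kernel_measurable[OF k]
  let ?S = "{\<omega>\<in>space M. Y \<omega> = y \<and> A \<omega> = a}"
  have "(\<integral>\<omega>. k (A \<omega>, Z \<omega>) * indicator ?S \<omega> \<partial>M) = (\<integral>\<omega>. indicator ?S \<omega> * k (a, Z \<omega>) \<partial>M)"
    by (rule Bochner_Integration.integral_cong) (auto simp: indicator_def)
  also have "\<dots> = cell_prob y a * cond_rate k a y"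
    unfolding cond_rate_def
  proof (rule integral_on_event_law)
    show "finite_measure (gauss y)"
      using prob_space_gauss by (rule prob_space.finite_measure)
    fix B :: "real set" assume "B \<in> sets borel"
    then show "prob {\<omega>\<in>space M. \<omega> \<in> ?S \<and> Z \<omega> \<in> B} = cell_prob y a * measure (gauss y) B"
      using joint_law[OF y a] by simp
  qed (use k cell_prob_pos[of y a] in auto)
  finally show ?thesis .
qed

lemma integral_unit_kernel_label:
  assumes k: "unit_kernel k" and g: "\<forall>\<omega>\<in>space M. g \<omega> = k (A \<omega>, Z \<omega>)" and y: "y \<in> {-1,1}"
  shows "(\<integral>\<omega>. g \<omega> * indicator {\<omega>\<in>space M. Y \<omega> = y} \<omega> \<partial>M) = pos_prob k y"
proof -
  note [measurable] = unit_kernel_measurable[OF k]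
  let ?f = "\<lambda>a \<omega>. k (A \<omega>, Z \<omega>) * indicator {\<omega>\<in>space M. Y \<omega> = y \<and> A \<omega> = a} \<omega>"
  have int: "integrable M (?f a)" for a
    using k by (intro integrable_const_bound[where B=1]) (auto simp: unit_kernel_bounds indicator_def)
  have "(\<integral>\<omega>. g \<omega> * indicator {\<omega>\<in>space M. Y \<omega> = y} \<omega> \<partial>M) = (\<integral>\<omega>. ?f 1 \<omega> + ?f (-1) \<omega> \<partial>M)"
    using g group_values by (intro Bochner_Integration.integral_cong) (auto simp: indicator_def)
  also have "\<dots> = pos_prob k y"
    using int integral_unit_kernel_cell[OF k y] by (simp add: pos_prob_def)
  finally show ?thesis .
qed

lemma rate_unit_kernel:
  "unit_kernel k \<Longrightarrow> \<forall>\<omega>\<in>space M. g \<omega> = k (A \<omega>, Z \<omega>) \<Longrightarrow> y \<in> {-1,1} \<Longrightarrow>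
    rate M Y g y = 2 * pos_prob k y"
  unfolding rate_def by (simp add: integral_unit_kernel_label prob_label)

lemma grp_rate_unit_kernel:
  assumes k: "unit_kernel k" and g: "\<forall>\<omega>\<in>space M. g \<omega> = k (A \<omega>, Z \<omega>)"
    and y: "y \<in> {-1,1}" and a: "a \<in> {-1,1}"
  shows "grp_rate M Y A g y a = cond_rate k a y"
proof -
  have "(\<integral>\<omega>. g \<omega> * indicator {\<omega>\<in>space M. Y \<omega> = y \<and> A \<omega> = a} \<omega> \<partial>M)
      = cell_prob y a * cond_rate k a y"
    using g integral_unit_kernel_cell[OF k y a]
    by (subst Bochner_Integration.integral_cong[OF refl, where g="\<lambda>\<omega>. k (A \<omega>, Z \<omega>) * _ \<omega>"]) auto
  then show ?thesis
    unfolding grp_rate_def prob_cell[OF y a] using cell_prob_pos[of y a] by simp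
qed

lemma rate_eo_unit_kernel:
  assumes k: "unit_kernel k" and g: "\<forall>\<omega>\<in>space M. g \<omega> = k (A \<omega>, Z \<omega>)"
    and eo: "eo_clf M Y A g" and y: "y \<in> {-1,1}"
  shows "rate M Y g y = cond_rate k 1 y"
proof -
  have "cond_rate k (-1) y = cond_rate k 1 y"
    using eo y grp_rate_unit_kernel[OF k g y] unfolding eo_clf_def by auto
  then have "pos_prob k y = (cell_prob y 1 + cell_prob y (-1)) * cond_rate k 1 y"
    unfolding pos_prob_def by (simp add: algebra_simps)
  then show ?thesis
    using rate_unit_kernel[OF k g y] by (simp add: cell_prob_sum)
qed

lemma exp_loss_unit_kernel:
  assumes k: "unit_kernel k" and g: "\<forall>\<omega>\<in>space M. g \<omega> = k (A \<omega>, Z \<omega>)"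
  shows "exp_loss M Y l g = (l (-1) 1 + l (-1) (-1)) / 2
    + (l 1 1 - l (-1) 1) * pos_prob k 1 + (l 1 (-1) - l (-1) (-1)) * pos_prob k (-1)"
proof -
  note [measurable] = unit_kernel_measurable[OF k]
  let ?I = "\<lambda>y. indicator {\<omega>\<in>space M. Y \<omega> = y} :: 'a \<Rightarrow> real"
  let ?f = "\<lambda>y \<omega>. l (-1) y * ?I y \<omega> + (l 1 y - l (-1) y) * (g \<omega> * ?I y \<omega>)"
  have int_I: "integrable M (?I y)" for y
    by (intro integrable_const_bound[where B=1]) (auto simp: indicator_def)
  have int_gI: "integrable M (\<lambda>\<omega>. g \<omega> * ?I y \<omega>)" for y
  proof -
    have "integrable M (\<lambda>\<omega>. k (A \<omega>, Z \<omega>) * ?I y \<omega>)"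
      using k by (intro integrable_const_bound[where B=1]) (auto simp: unit_kernel_bounds indicator_def)
    moreover have "integrable M (\<lambda>\<omega>. g \<omega> * ?I y \<omega>) \<longleftrightarrow> integrable M (\<lambda>\<omega>. k (A \<omega>, Z \<omega>) * ?I y \<omega>)"
      by (rule Bochner_Integration.integrable_cong[OF refl]) (use g in auto)
    ultimately show ?thesis by simp
  qed
  have "exp_loss M Y l g = (\<integral>\<omega>. ?f 1 \<omega> + ?f (-1) \<omega> \<partial>M)"
    unfolding exp_loss_def using label_values
    by (intro Bochner_Integration.integral_cong) (auto simp: indicator_def algebra_simps)
  also have "\<dots> = l (-1) 1 * prob {\<omega>\<in>space M. Y \<omega> = 1} + (l 1 1 - l (-1) 1) * pos_prob k 1
      + (l (-1) (-1) * prob {\<omega>\<in>space M. Y \<omega> = -1} + (l 1 (-1) - l (-1) (-1)) * pos_prob k (-1))"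
    using int_I int_gI by (simp add: integral_unit_kernel_label[OF k g])
  finally show ?thesis by (simp add: prob_label algebra_simps)
qed

lemma exp_loss_le_if_rates:
  assumes k1: "unit_kernel k1" and g1: "\<forall>\<omega>\<in>space M. g1 \<omega> = k1 (A \<omega>, Z \<omega>)"
    and k2: "unit_kernel k2" and g2: "\<forall>\<omega>\<in>space M. g2 \<omega> = k2 (A \<omega>, Z \<omega>)"
    and rates: "0 \<le> (l (-1) 1 - l 1 1) * (tpr M Y g1 - tpr M Y g2)
                  - (l 1 (-1) - l (-1) (-1)) * (fpr M Y g1 - fpr M Y g2)"
  shows "exp_loss M Y l g1 \<le> exp_loss M Y l g2"
  using rates
  by (simp add: exp_loss_unit_kernel[OF k1 g1] exp_loss_unit_kernel[OF k2 g2] tpr_def fpr_def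
      rate_unit_kernel[OF k1 g1] rate_unit_kernel[OF k2 g2] algebra_simps)

end

section \<open>Neyman--Pearson thresholds\<close>

text \<open>\<open>t\<close> is a Neyman--Pearson cut-off for the likelihood ratio \<open>exp (2 * s)\<close> at level \<open>w / u\<close>:
  predicting \<open>1\<close> exactly above \<open>t\<close> maximises \<open>c * (u * exp (2 * s) - w)\<close> over \<open>c \<in> [0, 1]\<close>.\<close>

definition np_threshold :: "ereal \<Rightarrow> real \<Rightarrow> real \<Rightarrow> bool" where
  "np_threshold t u w \<longleftrightarrow>
     (\<forall>s c. 0 \<le> c \<and> c \<le> 1 \<longrightarrow> 0 \<le> ((if t < ereal s then 1 else 0) - c) * (u * exp (2 * s) - w))"

lemma np_threshold_ereal: "np_threshold (ereal t) 1 (exp (2 * t))"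
  unfolding np_threshold_def
proof (intro allI impI)
  fix s c :: real assume c: "0 \<le> c \<and> c \<le> 1"
  show "0 \<le> ((if ereal t < ereal s then 1 else 0) - c) * (1 * exp (2 * s) - exp (2 * t))"
  proof (cases "t < s")
    case True then show ?thesis using c by auto
  next
    case False then show ?thesis using c by (simp add: mult_nonneg_nonpos)
  qed
qed

lemma np_threshold_exists:
  assumes u: "0 \<le> u" and w: "0 \<le> w"
  shows "\<exists>t. np_threshold t u w"
proof (cases "u = 0 \<or> w = 0")
  case True
  then have "np_threshold (if u = 0 then \<infinity> else -\<infinity>) u w"
    using u w unfolding np_threshold_def by auto
  then show ?thesis ..
next
  case False
  then have u: "0 < u" and w: "0 < w" using u w by auto
  define t where "t = ln (w / u) / 2"
  have "np_threshold (ereal t) u w"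
    unfolding np_threshold_def
  proof (intro allI impI)
    fix s c :: real assume "0 \<le> c \<and> c \<le> 1"
    then have "0 \<le> ((if ereal t < ereal s then 1 else 0) - c) * (1 * exp (2 * s) - exp (2 * t))"
      using np_threshold_ereal[of t] unfolding np_threshold_def by blast
    then have "0 \<le> u * (((if ereal t < ereal s then 1 else 0) - c) * (1 * exp (2 * s) - exp (2 * t)))"
      using u by simp
    also have "exp (2 * t) = w / u" using u w by (simp add: t_def)
    finally show "0 \<le> ((if ereal t < ereal s then 1 else 0) - c) * (u * exp (2 * s) - w)"
      using u by (simp add: algebra_simps)
  qed
  then show ?thesis ..
qed

lemma integrable_normal_density_mult_bounded:
  fixes f :: "real \<Rightarrow> real"
  assumes [measurable]: "f \<in> borel_measurable borel" and bound: "\<And>z. \<bar>f z\<bar> \<le> K"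
  shows "integrable lborel (\<lambda>z. normal_density m 1 z * f z)"
proof (rule Bochner_Integration.integrable_bound[where f="\<lambda>z. K * normal_density m 1 z"])
  show "AE z in lborel. norm (normal_density m 1 z * f z) \<le> norm (K * normal_density m 1 z)"
    using bound order_trans[OF abs_ge_zero bound]
    by (intro AE_I2) (simp add: abs_mult mult.commute mult_right_mono)
qed auto

text \<open>\<open>exp (2 * z)\<close> is the likelihood ratio of \<open>N(1,1)\<close> against \<open>N(-1,1)\<close> at \<open>z\<close>.\<close>

lemma gauss_neyman_pearson:
  fixes k1 k2 :: "real \<Rightarrow> real"
  assumes [measurable]: "k1 \<in> borel_measurable borel" "k2 \<in> borel_measurable borel"
    and k1: "\<And>z. 0 \<le> k1 z \<and> k1 z \<le> 1" and k2: "\<And>z. 0 \<le> k2 z \<and> k2 z \<le> 1"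
    and pointwise: "\<And>z. 0 \<le> (k1 z - k2 z) * (u * exp (2 * (b + z)) - w)"
  shows "0 \<le> u * exp (2 * b) * ((\<integral>z. k1 z \<partial>gauss 1) - (\<integral>z. k2 z \<partial>gauss 1))
             - w * ((\<integral>z. k1 z \<partial>gauss (-1)) - (\<integral>z. k2 z \<partial>gauss (-1)))"
proof -
  have int: "integrable lborel (\<lambda>z. normal_density m 1 z * k1 z)"
    "integrable lborel (\<lambda>z. normal_density m 1 z * k2 z)" for m
    using k1 k2 by (auto intro!: integrable_normal_density_mult_bounded[where K=1])
  have "u * exp (2 * b) * ((\<integral>z. k1 z \<partial>gauss 1) - (\<integral>z. k2 z \<partial>gauss 1))
        - w * ((\<integral>z. k1 z \<partial>gauss (-1)) - (\<integral>z. k2 z \<partial>gauss (-1)))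
      = (\<integral>z. u * exp (2 * b) * (normal_density 1 1 z * k1 z - normal_density 1 1 z * k2 z)
        - w * (normal_density (-1) 1 z * k1 z - normal_density (-1) 1 z * k2 z) \<partial>lborel)"
    using int by (simp add: integral_gauss)
  also have "\<dots> = (\<integral>z. normal_density (-1) 1 z * ((k1 z - k2 z) * (u * exp (2 * (b + z)) - w)) \<partial>lborel)"
    using normal_density_ratio[of 0]
    by (intro Bochner_Integration.integral_cong) (auto simp: exp_add algebra_simps)
  also have "0 \<le> \<dots>"
    by (intro integral_nonneg_AE AE_I2 mult_nonneg_nonneg[OF normal_density_nonneg pointwise])
  finally show ?thesis by simp
qed

lemma unit_kernel_continuous_thresh: "continuous_on UNIV f \<Longrightarrow> unit_kernel (thresh f t)"
  unfolding unit_kernel_def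
proof
  assume "continuous_on UNIV f"
  then have [measurable]: "f \<in> borel_measurable borel" by (rule borel_measurable_continuous_onI)
  show "thresh f t \<in> borel_measurable borel" unfolding thresh_def by measurable
qed (simp add: thresh_def)

lemma unit_kernel_sum_thresh: "unit_kernel (thresh (\<lambda>(a, z). a + z) t)"
  by (rule unit_kernel_continuous_thresh) (simp add: case_prod_beta' continuous_intros)

lemma unit_kernel_snd_thresh: "unit_kernel (thresh snd t)"
  by (rule unit_kernel_continuous_thresh) (simp add: continuous_on_snd)

lemma thresh_comp:
  "\<forall>\<omega>\<in>space M. S \<omega> = f (A \<omega>, Z \<omega>) \<Longrightarrow> \<forall>\<omega>\<in>space M. thresh S t \<omega> = thresh f t (A \<omega>, Z \<omega>)"
  unfolding thresh_def by simp

lemma np_pos_prob_sum_thresh: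
  assumes k: "unit_kernel k" and t: "np_threshold t u w"
  shows "0 \<le> u * (pos_prob (thresh (\<lambda>(a, z). a + z) t) 1 - pos_prob k 1)
    - w * (pos_prob (thresh (\<lambda>(a, z). a + z) t) (-1) - pos_prob k (-1))"
proof -
  let ?t = "thresh (\<lambda>(a, z). a + z) t"
  have group: "0 \<le> u * exp (2 * a) * (cond_rate ?t a 1 - cond_rate k a 1)
      - w * (cond_rate ?t a (-1) - cond_rate k a (-1))" for a
    unfolding cond_rate_def
  proof (rule gauss_neyman_pearson)
    fix z
    have "0 \<le> ((if t < ereal (a + z) then 1 else 0) - k (a, z)) * (u * exp (2 * (a + z)) - w)"
      using t unit_kernel_bounds[OF k] unfolding np_threshold_def by blast
    then show "0 \<le> (?t (a, z) - k (a, z)) * (u * exp (2 * (a + z)) - w)"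
      by (simp add: thresh_def)
  qed (use k unit_kernel_bounds[OF k] unit_kernel_slice_measurable[OF k] in \<open>auto simp: thresh_def\<close>)
  have "u * (pos_prob ?t 1 - pos_prob k 1) - w * (pos_prob ?t (-1) - pos_prob k (-1))
    = cell_prob (-1) 1 * (u * exp (2 * 1) * (cond_rate ?t 1 1 - cond_rate k 1 1)
        - w * (cond_rate ?t 1 (-1) - cond_rate k 1 (-1)))
    + cell_prob (-1) (-1) * (u * exp (2 * (-1)) * (cond_rate ?t (-1) 1 - cond_rate k (-1) 1)
        - w * (cond_rate ?t (-1) (-1) - cond_rate k (-1) (-1)))"
    unfolding pos_prob_def cell_prob_ratio[of 1] cell_prob_ratio[of "-1"] by (simp add: algebra_simps)
  also have "0 \<le> \<dots>"
    using group[of 1] group[of "-1"] cell_prob_pos[THEN less_imp_le]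
    by (intro add_nonneg_nonneg mult_nonneg_nonneg) auto
  finally show ?thesis .
qed

lemma np_cond_rate_snd_thresh:
  assumes k: "unit_kernel k" and t: "np_threshold t u w"
  shows "0 \<le> u * (cond_rate (thresh snd t) a 1 - cond_rate k b 1)
    - w * (cond_rate (thresh snd t) a (-1) - cond_rate k b (-1))"
proof -
  have "0 \<le> u * exp (2 * 0) * (cond_rate (thresh snd t) a 1 - cond_rate k b 1)
      - w * (cond_rate (thresh snd t) a (-1) - cond_rate k b (-1))"
    unfolding cond_rate_def
  proof (rule gauss_neyman_pearson)
    fix z
    have "0 \<le> ((if t < ereal z then 1 else 0) - k (b, z)) * (u * exp (2 * z) - w)"
      using t unit_kernel_bounds[OF k] unfolding np_threshold_def by blast
    then show "0 \<le> (thresh snd t (a, z) - k (b, z)) * (u * exp (2 * (0 + z)) - w)"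
      by (simp add: thresh_def)
  qed (use k unit_kernel_bounds[OF k] unit_kernel_slice_measurable[OF k] in \<open>auto simp: thresh_def\<close>)
  then show ?thesis by simp
qed

section \<open>Gaussian tails and the ROC curve of thresholds\<close>

definition gauss_tail :: "real \<Rightarrow> real \<Rightarrow> real" where
  "gauss_tail m s = measure (gauss m) {s<..}"

lemma gauss_tail_eq_cdf: "gauss_tail m s = 1 - cdf (gauss m) s"
proof -
  interpret real_distribution "gauss m" by (rule real_distribution_gauss)
  have "{s<..} = space (gauss m) - {..s}" by auto
  then show ?thesis unfolding gauss_tail_def cdf_def using prob_compl[of "{..s}"] by simp
qed

lemma gauss_tail_nonneg: "0 \<le> gauss_tail m s"
  unfolding gauss_tail_def by simp

lemma isCont_gauss_tail: "isCont (gauss_tail m) s"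
proof -
  interpret real_distribution "gauss m" by (rule real_distribution_gauss)
  have "emeasure (gauss m) {s} = 0"
    unfolding gauss_def
    by (subst emeasure_density) (auto intro!: nn_integral_zero' AE_mp[OF AE_lborel_singleton[of s]])
  then have "isCont (cdf (gauss m)) s" by (simp add: isCont_cdf measure_def)
  then show ?thesis unfolding gauss_tail_eq_cdf[abs_def] by (intro continuous_intros)
qed

lemma gauss_tail_at_bot: "(gauss_tail m \<longlongrightarrow> 1) at_bot"
proof -
  interpret real_distribution "gauss m" by (rule real_distribution_gauss)
  have "((\<lambda>s. 1 - cdf (gauss m) s) \<longlongrightarrow> 1 - 0) at_bot" by (intro tendsto_intros cdf_lim_at_bot)
  then show ?thesis unfolding gauss_tail_eq_cdf[abs_def] by simp
qed

lemma gauss_tail_at_top: "(gauss_tail m \<longlongrightarrow> 0) at_top"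
proof -
  interpret real_distribution "gauss m" by (rule real_distribution_gauss)
  have "((\<lambda>s. 1 - cdf (gauss m) s) \<longlongrightarrow> 1 - 1) at_top" by (intro tendsto_intros cdf_lim_at_top_prob)
  then show ?thesis unfolding gauss_tail_eq_cdf[abs_def] by simp
qed

lemma cond_rate_sum_thresh: "cond_rate (thresh (\<lambda>(a, z). a + z) (ereal r)) a m = gauss_tail m (r - a)"
proof -
  have "cond_rate (thresh (\<lambda>(a, z). a + z) (ereal r)) a m = (\<integral>z. indicator {r - a<..} z \<partial>gauss m)"
    unfolding cond_rate_def thresh_def by (rule Bochner_Integration.integral_cong) (auto simp: indicator_def)
  then show ?thesis unfolding gauss_tail_def by simp
qed

lemma cond_rate_snd_thresh: "cond_rate (thresh snd (ereal r)) a m = gauss_tail m r"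
proof -
  have "cond_rate (thresh snd (ereal r)) a m = (\<integral>z. indicator {r<..} z \<partial>gauss m)"
    unfolding cond_rate_def thresh_def by (rule Bochner_Integration.integral_cong) (auto simp: indicator_def)
  then show ?thesis unfolding gauss_tail_def by simp
qed

text \<open>In \<open>gauss_label_model\<close>, \<open>score_tail y r = Pr{A + Z > r | Y = y}\<close>.\<close>

definition score_tail :: "real \<Rightarrow> real \<Rightarrow> real" where
  "score_tail y r = 2 * (cell_prob y 1 * gauss_tail y (r - 1) + cell_prob y (-1) * gauss_tail y (r + 1))"

lemma filterlim_add_const_at_top: "filterlim (\<lambda>t::real. t + c) at_top at_top"
  unfolding filterlim_at_top eventually_at_top_linorder
proof
  show "\<exists>N. \<forall>n\<ge>N. Z \<le> n + c" for Z by (rule exI[of _ "Z - c"]) auto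
qed

lemma filterlim_add_const_at_bot: "filterlim (\<lambda>t::real. t + c) at_bot at_bot"
  unfolding filterlim_at_bot eventually_at_bot_linorder
proof
  show "\<exists>N. \<forall>n\<le>N. n + c \<le> Z" for Z by (rule exI[of _ "Z - c"]) auto
qed

lemma isCont_score_tail: "isCont (score_tail y) r"
  unfolding score_tail_def[abs_def]
  by (intro continuous_intros isCont_o2[OF _ isCont_gauss_tail])

lemma score_tail_at_bot: "(score_tail y \<longlongrightarrow> 1) at_bot"
proof -
  have "((\<lambda>r. gauss_tail y (r + c)) \<longlongrightarrow> 1) at_bot" for c
    by (rule filterlim_compose[OF gauss_tail_at_bot filterlim_add_const_at_bot])
  moreover from this[of "-1"] have "((\<lambda>r. gauss_tail y (r - 1)) \<longlongrightarrow> 1) at_bot" by simp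
  ultimately
  have "(score_tail y \<longlongrightarrow> 2 * (cell_prob y 1 * 1 + cell_prob y (-1) * 1)) at_bot"
    unfolding score_tail_def[abs_def] by (intro tendsto_intros)
  then show ?thesis by (simp add: cell_prob_sum)
qed

lemma score_tail_at_top: "(score_tail y \<longlongrightarrow> 0) at_top"
proof -
  have "((\<lambda>r. gauss_tail y (r + c)) \<longlongrightarrow> 0) at_top" for c
    by (rule filterlim_compose[OF gauss_tail_at_top filterlim_add_const_at_top])
  moreover from this[of "-1"] have "((\<lambda>r. gauss_tail y (r - 1)) \<longlongrightarrow> 0) at_top" by simp
  ultimately
  have "(score_tail y \<longlongrightarrow> 2 * (cell_prob y 1 * 0 + cell_prob y (-1) * 0)) at_top"
    unfolding score_tail_def[abs_def] by (intro tendsto_intros)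
  then show ?thesis by simp
qed

lemma score_tail_nonneg: "0 \<le> score_tail y r"
  unfolding score_tail_def
  using gauss_tail_nonneg cell_prob_pos[THEN less_imp_le] by (simp add: add_nonneg_nonneg)

lemma IVT_at_bot_at_top:
  fixes f :: "real \<Rightarrow> real"
  assumes cont: "\<And>x. isCont f x" and bot: "(f \<longlongrightarrow> a) at_bot" and top: "(f \<longlongrightarrow> b) at_top"
    and v: "b < v" "v < a"
  shows "\<exists>x. f x = v"
proof -
  obtain x1 where x1: "\<And>x. x \<le> x1 \<Longrightarrow> v < f x"
    using order_tendstoD(1)[OF bot v(2)] by (auto simp: eventually_at_bot_linorder)
  obtain x2 where x2: "\<And>x. x2 \<le> x \<Longrightarrow> f x < v"
    using order_tendstoD(2)[OF top v(1)] by (auto simp: eventually_at_top_linorder)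
  have "\<exists>x. min x1 x2 \<le> x \<and> x \<le> max x1 x2 \<and> f x = v"
    by (rule IVT2) (use x1[of "min x1 x2"] x2[of "max x1 x2"] cont in auto)
  then show ?thesis by blast
qed

text \<open>By continuity the thresholds reach every false-positive level of a competitor, and at
  that threshold the Neyman--Pearson inequality yields at least its true-positive rate; the
  extreme levels are covered by the thresholds \<open>-\<infinity>\<close> and \<open>\<infinity>\<close>.\<close>

lemma threshold_dominates_roc_point:
  fixes fp tp :: "ereal \<Rightarrow> real" and fp0 tp0 :: real
  assumes cont: "\<And>r. isCont (\<lambda>r. fp (ereal r)) r"
    and fp_bot: "((\<lambda>r. fp (ereal r)) \<longlongrightarrow> fp (-\<infinity>)) at_bot"
    and fp_top: "((\<lambda>r. fp (ereal r)) \<longlongrightarrow> 0) at_top"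
    and tp_top: "((\<lambda>r. tp (ereal r)) \<longlongrightarrow> 0) at_top"
    and fp_inf: "fp \<infinity> = 0" and tp_inf: "tp \<infinity> = 0"
    and fp_nonneg: "\<And>r. 0 \<le> fp (ereal r)"
    and fp0: "0 \<le> fp0" and tp0: "tp0 \<le> tp (-\<infinity>)"
    and np: "\<And>r. \<exists>c\<ge>0. c * (fp (ereal r) - fp0) \<le> tp (ereal r) - tp0"
  shows "\<exists>t. fp t \<le> fp0 \<and> tp0 \<le> tp t"
proof -
  consider "fp (-\<infinity>) \<le> fp0" | "fp0 = 0" | "0 < fp0" "fp0 < fp (-\<infinity>)"
    using fp0 by linarith
  then show ?thesis
  proof cases
    case 1
    then show ?thesis using tp0 by blast
  next
    case 2
    have "tp0 \<le> tp (ereal r)" for r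
    proof -
      obtain c where "0 \<le> c" and "c * fp (ereal r) \<le> tp (ereal r) - tp0"
        using np[of r] 2 by auto
      moreover have "0 \<le> c * fp (ereal r)" using \<open>0 \<le> c\<close> fp_nonneg by simp
      ultimately show ?thesis by linarith
    qed
    then have "tp0 \<le> 0"
      by (intro tendsto_lowerbound[OF tp_top]) auto
    then show ?thesis using 2 fp_inf tp_inf by (intro exI[of _ \<infinity>]) simp
  next
    case 3
    then obtain r where r: "fp (ereal r) = fp0"
      using IVT_at_bot_at_top[OF cont fp_bot fp_top] by blast
    then have "tp0 \<le> tp (ereal r)" using np[of r] by auto
    then show ?thesis using r by (intro exI[of _ "ereal r"]) simp
  qed
qed

section \<open>Optimal scores in the model\<close>

context gauss_label_model
begin

lemma rate_thresh_MInfty: "y \<in> {-1,1} \<Longrightarrow> rate M Y (thresh S (-\<infinity>)) y = 1"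
  unfolding rate_def thresh_def using prob_label[of y] by simp

lemma rate_thresh_PInfty: "rate M Y (thresh S \<infinity>) y = 0"
  unfolding rate_def thresh_def by simp

lemma rate_sum_thresh:
  assumes S: "\<forall>\<omega>\<in>space M. S \<omega> = A \<omega> + Z \<omega>" and y: "y \<in> {-1,1}"
  shows "rate M Y (thresh S (ereal r)) y = score_tail y r"
proof -
  have "\<forall>\<omega>\<in>space M. S \<omega> = (\<lambda>(a, z). a + z) (A \<omega>, Z \<omega>)" using S by simp
  from rate_unit_kernel[OF unit_kernel_sum_thresh thresh_comp[OF this] y]
  show ?thesis by (simp add: pos_prob_def cond_rate_sum_thresh score_tail_def)
qed

lemma rate_Z_thresh:
  assumes y: "y \<in> {-1,1}"
  shows "rate M Y (thresh Z (ereal r)) y = gauss_tail y r"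
proof -
  have "\<forall>\<omega>\<in>space M. Z \<omega> = snd (A \<omega>, Z \<omega>)" by simp
  from rate_unit_kernel[OF unit_kernel_snd_thresh thresh_comp[OF this] y]
  have "rate M Y (thresh Z (ereal r)) y = 2 * ((cell_prob y 1 + cell_prob y (-1)) * gauss_tail y r)"
    by (simp add: pos_prob_def cond_rate_snd_thresh distrib_right)
  then show ?thesis by (simp add: cell_prob_sum)
qed

lemma eo_clf_Z_thresh: "eo_clf M Y A (thresh Z t)"
proof -
  have "\<forall>\<omega>\<in>space M. Z \<omega> = snd (A \<omega>, Z \<omega>)" by simp
  note grp = grp_rate_unit_kernel[OF unit_kernel_snd_thresh thresh_comp[OF this]]
  have "cond_rate (thresh snd t) (-1) y = cond_rate (thresh snd t) 1 y" for y
    by (simp add: cond_rate_def thresh_def)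
  then show ?thesis
    unfolding eo_clf_def using grp by simp
qed

lemma np_rates_sum_thresh:
  assumes k: "unit_kernel k" and g: "\<forall>\<omega>\<in>space M. g \<omega> = k (A \<omega>, Z \<omega>)"
    and S: "\<forall>\<omega>\<in>space M. S \<omega> = A \<omega> + Z \<omega>" and t: "np_threshold t u w"
  shows "0 \<le> u * (tpr M Y (thresh S t) - tpr M Y g) - w * (fpr M Y (thresh S t) - fpr M Y g)"
proof -
  have "\<forall>\<omega>\<in>space M. S \<omega> = (\<lambda>(a, z). a + z) (A \<omega>, Z \<omega>)" using S by simp
  note rate_t = rate_unit_kernel[OF unit_kernel_sum_thresh thresh_comp[OF this]]
  have "u * (tpr M Y (thresh S t) - tpr M Y g) - w * (fpr M Y (thresh S t) - fpr M Y g)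
    = 2 * (u * (pos_prob (thresh (\<lambda>(a, z). a + z) t) 1 - pos_prob k 1)
        - w * (pos_prob (thresh (\<lambda>(a, z). a + z) t) (-1) - pos_prob k (-1)))"
    by (simp add: tpr_def fpr_def rate_t rate_unit_kernel[OF k g] algebra_simps)
  also have "0 \<le> \<dots>"
    using np_pos_prob_sum_thresh[OF k t] by simp
  finally show ?thesis .
qed

lemma np_rates_Z_thresh:
  assumes k: "unit_kernel k" and g: "\<forall>\<omega>\<in>space M. g \<omega> = k (A \<omega>, Z \<omega>)"
    and eo: "eo_clf M Y A g" and t: "np_threshold t u w"
  shows "0 \<le> u * (tpr M Y (thresh Z t) - tpr M Y g) - w * (fpr M Y (thresh Z t) - fpr M Y g)"
proof -
  have "\<forall>\<omega>\<in>space M. Z \<omega> = snd (A \<omega>, Z \<omega>)" by simp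
  note rate_t = rate_eo_unit_kernel[OF unit_kernel_snd_thresh thresh_comp[OF this] eo_clf_Z_thresh]
  show ?thesis
    using np_cond_rate_snd_thresh[OF k t, of 1 1]
    by (simp add: tpr_def fpr_def rate_t rate_eo_unit_kernel[OF k g eo])
qed

theorem opt_unconstrained_score_sum:
  fixes \<phi> :: "real \<times> real \<Rightarrow> 'f::topological_space"
  assumes \<phi>: "\<phi> \<in> borel_measurable borel" "\<forall>\<omega>\<in>space M. F \<omega> = \<phi> (A \<omega>, Z \<omega>)"
    and S: "\<forall>\<omega>\<in>space M. S \<omega> = A \<omega> + Z \<omega>"
  shows "opt_unconstrained_score M Y F S"
  unfolding opt_unconstrained_score_def
proof (intro conjI allI impI)
  fix g assume "rand_clf M F g"
  then obtain k where k: "unit_kernel k" and g: "\<forall>\<omega>\<in>space M. g \<omega> = k (A \<omega>, Z \<omega>)"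
    using rand_clf_unit_kernel[OF _ \<phi>] by blast
  have rates: "fpr M Y (thresh S (ereal r)) = score_tail (-1) r"
    "tpr M Y (thresh S (ereal r)) = score_tail 1 r" for r
    by (simp_all add: fpr_def tpr_def rate_sum_thresh[OF S])
  have extremes: "fpr M Y (thresh S (-\<infinity>)) = 1" "tpr M Y (thresh S (-\<infinity>)) = 1"
    "fpr M Y (thresh S \<infinity>) = 0" "tpr M Y (thresh S \<infinity>) = 0"
    by (simp_all add: fpr_def tpr_def rate_thresh_MInfty rate_thresh_PInfty)
  have "0 \<le> fpr M Y g" "tpr M Y g \<le> 1"
    using pos_prob_bounds[OF k] by (simp_all add: fpr_def tpr_def rate_unit_kernel[OF k g])
  show "\<exists>t. fpr M Y (thresh S t) \<le> fpr M Y g \<and> tpr M Y g \<le> tpr M Y (thresh S t)"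
  proof (rule threshold_dominates_roc_point
      [where fp="\<lambda>t. fpr M Y (thresh S t)" and tp="\<lambda>t. tpr M Y (thresh S t)"])
    show "\<exists>c\<ge>0. c * (fpr M Y (thresh S (ereal r)) - fpr M Y g)
        \<le> tpr M Y (thresh S (ereal r)) - tpr M Y g" for r
      using np_rates_sum_thresh[OF k g S np_threshold_ereal[of r]] by (intro exI[of _ "exp (2 * r)"]) simp
  qed (use \<open>0 \<le> fpr M Y g\<close> \<open>tpr M Y g \<le> 1\<close> in
    \<open>simp_all add: rates extremes isCont_score_tail score_tail_at_bot score_tail_at_top score_tail_nonneg\<close>)
next
  fix l :: "real \<Rightarrow> real \<Rightarrow> real" assume "loss_fn l"
  then obtain t where t: "np_threshold t (l (-1) 1 - l 1 1) (l 1 (-1) - l (-1) (-1))"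
    using np_threshold_exists unfolding loss_fn_def by fastforce
  have S': "\<forall>\<omega>\<in>space M. S \<omega> = (\<lambda>(a, z). a + z) (A \<omega>, Z \<omega>)" using S by simp
  show "\<exists>t. \<forall>g. rand_clf M F g \<longrightarrow> exp_loss M Y l (thresh S t) \<le> exp_loss M Y l g"
  proof (intro exI allI impI)
    fix g assume "rand_clf M F g"
    then obtain k where k: "unit_kernel k" and g: "\<forall>\<omega>\<in>space M. g \<omega> = k (A \<omega>, Z \<omega>)"
      using rand_clf_unit_kernel[OF _ \<phi>] by blast
    show "exp_loss M Y l (thresh S t) \<le> exp_loss M Y l g"
      by (rule exp_loss_le_if_rates[OF unit_kernel_sum_thresh thresh_comp[OF S'] k g
          np_rates_sum_thresh[OF k g S t]])
  qed
qed

theorem opt_eo_score_Z: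
  fixes \<phi> :: "real \<times> real \<Rightarrow> 'f::topological_space"
  assumes \<phi>: "\<phi> \<in> borel_measurable borel" "\<forall>\<omega>\<in>space M. F \<omega> = \<phi> (A \<omega>, Z \<omega>)"
  shows "opt_eo_score M Y A F Z"
  unfolding opt_eo_score_def
proof (intro conjI allI impI eo_score_Z)
  fix g assume g: "rand_clf M F g \<and> eo_clf M Y A g"
  then obtain k where k: "unit_kernel k" and gk: "\<forall>\<omega>\<in>space M. g \<omega> = k (A \<omega>, Z \<omega>)"
    using rand_clf_unit_kernel[OF _ \<phi>] by blast
  have rates: "fpr M Y (thresh Z (ereal r)) = gauss_tail (-1) r"
    "tpr M Y (thresh Z (ereal r)) = gauss_tail 1 r" for r
    by (simp_all add: fpr_def tpr_def rate_Z_thresh)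
  have extremes: "fpr M Y (thresh Z (-\<infinity>)) = 1" "tpr M Y (thresh Z (-\<infinity>)) = 1"
    "fpr M Y (thresh Z \<infinity>) = 0" "tpr M Y (thresh Z \<infinity>) = 0"
    by (simp_all add: fpr_def tpr_def rate_thresh_MInfty rate_thresh_PInfty)
  have "0 \<le> fpr M Y g" "tpr M Y g \<le> 1"
    using pos_prob_bounds[OF k] by (simp_all add: fpr_def tpr_def rate_unit_kernel[OF k gk])
  show "\<exists>t. fpr M Y (thresh Z t) \<le> fpr M Y g \<and> tpr M Y g \<le> tpr M Y (thresh Z t)"
  proof (rule threshold_dominates_roc_point
      [where fp="\<lambda>t. fpr M Y (thresh Z t)" and tp="\<lambda>t. tpr M Y (thresh Z t)"])
    show "\<exists>c\<ge>0. c * (fpr M Y (thresh Z (ereal r)) - fpr M Y g)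
        \<le> tpr M Y (thresh Z (ereal r)) - tpr M Y g" for r
      using np_rates_Z_thresh[OF k gk _ np_threshold_ereal[of r]] g by (intro exI[of _ "exp (2 * r)"]) simp
  qed (use \<open>0 \<le> fpr M Y g\<close> \<open>tpr M Y g \<le> 1\<close> in
    \<open>simp_all add: rates extremes isCont_gauss_tail gauss_tail_at_bot gauss_tail_at_top gauss_tail_nonneg\<close>)
next
  fix l :: "real \<Rightarrow> real \<Rightarrow> real" assume "loss_fn l"
  then obtain t where t: "np_threshold t (l (-1) 1 - l 1 1) (l 1 (-1) - l (-1) (-1))"
    using np_threshold_exists unfolding loss_fn_def by fastforce
  have Z: "\<forall>\<omega>\<in>space M. Z \<omega> = snd (A \<omega>, Z \<omega>)" by simp
  show "\<exists>t. eo_clf M Y A (thresh Z t)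
    \<and> (\<forall>g. rand_clf M F g \<and> eo_clf M Y A g \<longrightarrow> exp_loss M Y l (thresh Z t) \<le> exp_loss M Y l g)"
  proof (intro exI conjI allI impI eo_clf_Z_thresh)
    fix g assume g: "rand_clf M F g \<and> eo_clf M Y A g"
    then obtain k where k: "unit_kernel k" and gk: "\<forall>\<omega>\<in>space M. g \<omega> = k (A \<omega>, Z \<omega>)"
      using rand_clf_unit_kernel[OF _ \<phi>] by blast
    show "exp_loss M Y l (thresh Z t) \<le> exp_loss M Y l g"
      using g by (intro exp_loss_le_if_rates[OF unit_kernel_snd_thresh thresh_comp[OF Z] k gk]
          np_rates_Z_thresh[OF k gk _ t]) simp
  qed
qed

end

section \<open>The two scenarios\<close>

lemma measure_gauss_shift:
  assumes "B \<in> sets borel"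
  shows "measure (gauss 0) {x. y + x \<in> B} = measure (gauss y) B"
proof -
  have "measure (gauss 0) {x. y + x \<in> B} = (\<integral>x. indicator {x. y + x \<in> B} x \<partial>gauss 0)"
    by simp
  also have "\<dots> = (\<integral>x. normal_density (- y + y) 1 x * indicator B (x - - y) \<partial>lborel)"
    using assms by (subst integral_gauss) (auto intro!: Bochner_Integration.integral_cong
        simp: indicator_def add.commute)
  also have "\<dots> = measure (gauss y) B"
    using assms by (rule integral_gauss_shift)
  finally show ?thesis .
qed

text \<open>The density of \<open>X\<^sub>3\<close> given \<open>A = a\<close> in scenario II.\<close>

definition mixture_density :: "real \<Rightarrow> real \<Rightarrow> real" where
  "mixture_density a x = 1 / (1 + exp (-2*a)) * normal_density (a+1) 1 x
    + 1 / (1 + exp (2*a)) * normal_density (a-1) 1 x"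

lemma borel_measurable_mixture_density [measurable]: "mixture_density a \<in> borel_measurable borel"
  unfolding mixture_density_def by measurable

lemma mixture_density_nonneg: "0 \<le> mixture_density a x"
  unfolding mixture_density_def
  by (intro add_nonneg_nonneg mult_nonneg_nonneg) (auto simp: add_pos_pos less_imp_le)

lemma integrable_mixture_density: "integrable lborel (mixture_density a)"
  unfolding mixture_density_def[abs_def]
  by (intro Bochner_Integration.integrable_add integrable_mult_right) auto

lemma mixture_density_eq:
  "mixture_density a x = normal_density (a-1) 1 x * (1 + exp (2*x)) / (1 + exp (2*a))"
proof -
  define u E F where "u = normal_density (a-1) 1 x" and "E = exp (2*x)" and "F = exp (2*a)"
  have "0 < F" by (simp add: F_def)
  then have "1 / (1 + exp (-2*a)) = F / (1 + F)"
    by (simp add: F_def exp_minus field_simps)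
  moreover have "normal_density (a+1) 1 x = u * E / F"
    using normal_density_ratio[of a x] by (simp add: u_def E_def F_def right_diff_distrib exp_diff)
  ultimately have "1 / (1 + exp (-2*a)) * normal_density (a+1) 1 x = u * E / (1 + F)"
    using \<open>0 < F\<close> by simp
  then show ?thesis
    unfolding mixture_density_def by (simp add: u_def E_def F_def add_divide_distrib algebra_simps)
qed

text \<open>Bayes' rule: the joint density of \<open>Y = y\<close> and \<open>X\<^sub>3 = x\<close> given \<open>A = a\<close>.\<close>

lemma mixture_posterior:
  assumes y: "y \<in> {-1,1}"
  shows "mixture_density a x * (1 / (1 + exp (-2 * y * x))) = 2 * cell_prob y a * normal_density (a + y) 1 x"
proof -
  define u E F where "u = normal_density (a-1) 1 x" and "E = exp (2*x)" and "F = exp (2*a)"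
  have pos: "0 < E" "0 < F" "0 < 1 + E" "0 < 1 + F"
    unfolding E_def F_def by (simp_all add: add_pos_pos)
  have mixture: "mixture_density a x = u * (1 + E) / (1 + F)"
    unfolding mixture_density_eq u_def E_def F_def ..
  from y consider "y = 1" | "y = -1" by auto
  then show ?thesis
  proof cases
    case 1
    have "exp (-2 * 1 * x) = 1 / E" "exp (-2 * a * 1) = 1 / F"
      unfolding E_def F_def by (simp_all add: exp_minus inverse_eq_divide)
    moreover have "1 / (1 + 1 / E) = E / (1 + E)" "1 / (1 + 1 / F) = F / (1 + F)"
      using pos by (simp_all add: field_simps)
    moreover have "normal_density (a + 1) 1 x = u * E / F"
      using normal_density_ratio[of a x] by (simp add: u_def E_def F_def right_diff_distrib exp_diff)
    ultimately show ?thesis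
      using pos unfolding mixture 1 cell_prob_def by (simp, simp add: field_simps)
  next
    case 2
    have "exp (-2 * -1 * x) = E" "exp (-2 * a * -1) = F" "normal_density (a + -1) 1 x = u"
      unfolding E_def F_def u_def by simp_all
    then show ?thesis
      using pos unfolding mixture 2 cell_prob_def by (simp, simp add: field_simps)
  qed
qed

lemma scenario1_gauss_label_model:
  fixes M :: "'a measure" and A Y N X2 :: "'a \<Rightarrow> real"
  assumes "prob_space M"
    and meas: "A \<in> borel_measurable M" "Y \<in> borel_measurable M" "N \<in> borel_measurable M"
    and vals: "\<forall>\<omega>\<in>space M. A \<omega> \<in> {-1,1} \<and> Y \<omega> \<in> {-1,1}"
    and A_half: "measure M {\<omega>\<in>space M. A \<omega> = 1} = 1/2"
    and Y_given_A: "\<forall>a\<in>{-1,1}. \<forall>y\<in>{-1,1}.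
       measure M {\<omega>\<in>space M. Y \<omega> = y \<and> A \<omega> = a}
         = 1 / (1 + exp (-2*a*y)) * measure M {\<omega>\<in>space M. A \<omega> = a}"
    and N_normal: "distributed M lborel N (\<lambda>x. ennreal (normal_density 0 1 x))"
    and N_indep: "\<forall>a\<in>{-1,1}. \<forall>y\<in>{-1,1}. \<forall>B\<in>sets borel.
       measure M {\<omega>\<in>space M. N \<omega> \<in> B \<and> A \<omega> = a \<and> Y \<omega> = y}
         = measure M {\<omega>\<in>space M. N \<omega> \<in> B} * measure M {\<omega>\<in>space M. A \<omega> = a \<and> Y \<omega> = y}"
    and X2: "\<forall>\<omega>\<in>space M. X2 \<omega> = Y \<omega> + N \<omega>"
  shows "gauss_label_model M Y A X2"
proof -
  interpret prob_space M by fact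
  have [measurable]: "A \<in> borel_measurable M" "Y \<in> borel_measurable M" "N \<in> borel_measurable M"
    using meas by auto
  have "X2 \<in> borel_measurable M"
    by (subst measurable_cong[where g="\<lambda>\<omega>. Y \<omega> + N \<omega>"]) (auto simp: X2)
  moreover have "prob {\<omega>\<in>space M. Y \<omega> = y \<and> A \<omega> = a \<and> X2 \<omega> \<in> B} = cell_prob y a * measure (gauss y) B"
    if y: "y \<in> {-1,1}" and a: "a \<in> {-1,1}" and B[measurable]: "B \<in> sets borel" for y a B
  proof -
    have shifted[measurable]: "{n. y + n \<in> B} \<in> sets borel" by measurable
    have "{\<omega>\<in>space M. Y \<omega> = y \<and> A \<omega> = a \<and> X2 \<omega> \<in> B}
        = {\<omega>\<in>space M. N \<omega> \<in> {n. y + n \<in> B} \<and> A \<omega> = a \<and> Y \<omega> = y}"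
      using X2 by auto
    also have "prob \<dots> = prob {\<omega>\<in>space M. N \<omega> \<in> {n. y + n \<in> B}} * prob {\<omega>\<in>space M. A \<omega> = a \<and> Y \<omega> = y}"
      using N_indep a y shifted by blast
    also have "prob {\<omega>\<in>space M. N \<omega> \<in> {n. y + n \<in> B}} = measure (gauss 0) {n. y + n \<in> B}"
    proof -
      have "prob {\<omega>\<in>space M. N \<omega> \<in> {n. y + n \<in> B}} = measure (distr M lborel N) {n. y + n \<in> B}"
        by (subst measure_distr) (auto intro!: arg_cong[where f=prob])
      also have "distr M lborel N = gauss 0"
        using N_normal unfolding distributed_def gauss_def by simp
      finally show ?thesis .
    qed
    also have "prob {\<omega>\<in>space M. A \<omega> = a \<and> Y \<omega> = y} = cell_prob y a"
    proof -
      have A: "prob {\<omega>\<in>space M. A \<omega> = a} = 1/2"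
        using vals by (intro prob_sign_eq_half[OF meas(1) _ A_half a]) auto
      have swap: "{\<omega>\<in>space M. A \<omega> = a \<and> Y \<omega> = y} = {\<omega>\<in>space M. Y \<omega> = y \<and> A \<omega> = a}"
        by auto
      have "prob {\<omega>\<in>space M. Y \<omega> = y \<and> A \<omega> = a}
          = 1 / (1 + exp (-2*a*y)) * prob {\<omega>\<in>space M. A \<omega> = a}"
        using Y_given_A a y by blast
      then show ?thesis unfolding swap A cell_prob_def by simp
    qed
    finally show ?thesis
      using measure_gauss_shift[OF B] by simp
  qed
  ultimately show ?thesis
    using meas vals by unfold_locales auto
qed

lemma scenario2_gauss_label_model:
  fixes M :: "'a measure" and A Y X3 :: "'a \<Rightarrow> real"
  assumes "prob_space M"
    and meas: "A \<in> borel_measurable M" "Y \<in> borel_measurable M" "X3 \<in> borel_measurable M"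
    and vals: "\<forall>\<omega>\<in>space M. A \<omega> \<in> {-1,1} \<and> Y \<omega> \<in> {-1,1}"
    and A_half: "measure M {\<omega>\<in>space M. A \<omega> = 1} = 1/2"
    and X3_given_A: "\<forall>a\<in>{-1,1}. \<forall>B\<in>sets borel.
       measure M {\<omega>\<in>space M. A \<omega> = a \<and> X3 \<omega> \<in> B}
         = measure M {\<omega>\<in>space M. A \<omega> = a} *
           (LINT x:B|lborel. 1 / (1 + exp (-2*a)) * normal_density (a+1) 1 x
                             + 1 / (1 + exp (2*a)) * normal_density (a-1) 1 x)"
    and Y_given_X3: "\<forall>y\<in>{-1,1}. \<forall>a\<in>{-1,1}. \<forall>B\<in>sets borel.
       measure M {\<omega>\<in>space M. Y \<omega> = y \<and> A \<omega> = a \<and> X3 \<omega> \<in> B}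
         = (\<integral>\<omega>. indicator {\<omega>\<in>space M. A \<omega> = a \<and> X3 \<omega> \<in> B} \<omega>
                   * (1 / (1 + exp (-2 * y * X3 \<omega>))) \<partial>M)"
  shows "gauss_label_model M Y A (\<lambda>\<omega>. X3 \<omega> - A \<omega>)"
proof -
  interpret prob_space M by fact
  have [measurable]: "A \<in> borel_measurable M" "Y \<in> borel_measurable M" "X3 \<in> borel_measurable M"
    using meas by auto
  have "prob {\<omega>\<in>space M. Y \<omega> = y \<and> A \<omega> = a \<and> X3 \<omega> - A \<omega> \<in> B} = cell_prob y a * measure (gauss y) B"
    if y: "y \<in> {-1,1}" and a: "a \<in> {-1,1}" and B[measurable]: "B \<in> sets borel" for y a B
  proof -
    let ?\<mu> = "density lborel (mixture_density a)"
    note mix = mixture_density_nonneg integrable_mixture_density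
    define B' where "B' = {x. x - a \<in> B}"
    have [measurable]: "B' \<in> sets borel" unfolding B'_def by measurable
    define f where "f x = indicator B' x * (1 / (1 + exp (-2 * y * x)))" for x :: real
    have [measurable]: "f \<in> borel_measurable borel" unfolding f_def by measurable
    have "{\<omega>\<in>space M. Y \<omega> = y \<and> A \<omega> = a \<and> X3 \<omega> - A \<omega> \<in> B} = {\<omega>\<in>space M. Y \<omega> = y \<and> A \<omega> = a \<and> X3 \<omega> \<in> B'}"
      unfolding B'_def by auto
    also have "prob \<dots> = (\<integral>\<omega>. indicator {\<omega>\<in>space M. A \<omega> = a} \<omega> * f (X3 \<omega>) \<partial>M)"
      using Y_given_X3 y a unfolding f_def
      by (auto intro!: Bochner_Integration.integral_cong simp: indicator_def)
    also have "\<dots> = 1/2 * (\<integral>x. f x \<partial>?\<mu>)"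
    proof (rule integral_on_event_law)
      show "finite_measure ?\<mu>"
        using mix by (intro finite_measure_density_lborel) auto
      fix C :: "real set" assume C: "C \<in> sets borel"
      have "prob {\<omega>\<in>space M. \<omega> \<in> {\<omega>\<in>space M. A \<omega> = a} \<and> X3 \<omega> \<in> C}
          = prob {\<omega>\<in>space M. A \<omega> = a} * (LINT x:C|lborel. mixture_density a x)"
        using X3_given_A a C unfolding mixture_density_def by auto
      also have "prob {\<omega>\<in>space M. A \<omega> = a} = 1/2"
        using vals by (intro prob_sign_eq_half[OF meas(1) _ A_half a]) auto
      finally show "prob {\<omega>\<in>space M. \<omega> \<in> {\<omega>\<in>space M. A \<omega> = a} \<and> X3 \<omega> \<in> C}
          = 1/2 * measure ?\<mu> C"
        using measure_density_lborel[OF _ mix C] by simp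
    qed auto
    also have "(\<integral>x. f x \<partial>?\<mu>) = (\<integral>x. mixture_density a x * f x \<partial>lborel)"
      using mix by (subst integral_density) auto
    also have "\<dots> = (\<integral>x. 2 * cell_prob y a * (normal_density (a + y) 1 x * indicator B (x - a)) \<partial>lborel)"
      using mixture_posterior[OF y, of a]
      by (intro Bochner_Integration.integral_cong) (auto simp: f_def B'_def indicator_def)
    also have "\<dots> = 2 * cell_prob y a * measure (gauss y) B"
      by (simp add: integral_gauss_shift)
    finally show ?thesis by simp
  qed
  then show ?thesis
    using meas vals by unfold_locales auto
qed

theorem proposition6p1:
  fixes M :: "'a measure" and A Y N X1 X2 :: "'a \<Rightarrow> real"
    and M' :: "'b measure" and A' Y' X3 :: "'b \<Rightarrow> real"
  assumes \<comment> \<open>Scenario I\<close>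
    P1: "prob_space M"
    and meas1: "A \<in> borel_measurable M" "Y \<in> borel_measurable M" "N \<in> borel_measurable M"
    and vals1: "\<forall>\<omega>\<in>space M. A \<omega> \<in> {-1,1} \<and> Y \<omega> \<in> {-1,1}"
    and A1: "measure M {\<omega>\<in>space M. A \<omega> = 1} = 1/2"
    and YA1: "\<forall>a\<in>{-1,1}. \<forall>y\<in>{-1,1}.
       measure M {\<omega>\<in>space M. Y \<omega> = y \<and> A \<omega> = a}
         = 1 / (1 + exp (-2*a*y)) * measure M {\<omega>\<in>space M. A \<omega> = a}"
    and N1: "distributed M lborel N (\<lambda>x. ennreal (normal_density 0 1 x))"
    and indN: "\<forall>a\<in>{-1,1}. \<forall>y\<in>{-1,1}. \<forall>B\<in>sets borel.
       measure M {\<omega>\<in>space M. N \<omega> \<in> B \<and> A \<omega> = a \<and> Y \<omega> = y}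
         = measure M {\<omega>\<in>space M. N \<omega> \<in> B} * measure M {\<omega>\<in>space M. A \<omega> = a \<and> Y \<omega> = y}"
    and X1: "\<forall>\<omega>\<in>space M. X1 \<omega> = A \<omega>"
    and X2: "\<forall>\<omega>\<in>space M. X2 \<omega> = Y \<omega> + N \<omega>"
  assumes \<comment> \<open>Scenario II\<close>
    P2: "prob_space M'"
    and meas2: "A' \<in> borel_measurable M'" "Y' \<in> borel_measurable M'" "X3 \<in> borel_measurable M'"
    and vals2: "\<forall>\<omega>\<in>space M'. A' \<omega> \<in> {-1,1} \<and> Y' \<omega> \<in> {-1,1}"
    and A2: "measure M' {\<omega>\<in>space M'. A' \<omega> = 1} = 1/2"
    and X3A: "\<forall>a\<in>{-1,1}. \<forall>B\<in>sets borel.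
       measure M' {\<omega>\<in>space M'. A' \<omega> = a \<and> X3 \<omega> \<in> B}
         = measure M' {\<omega>\<in>space M'. A' \<omega> = a} *
           (LINT x:B|lborel. 1 / (1 + exp (-2*a)) * normal_density (a+1) 1 x
                             + 1 / (1 + exp (2*a)) * normal_density (a-1) 1 x)"
    and YX3: "\<forall>y\<in>{-1,1}. \<forall>a\<in>{-1,1}. \<forall>B\<in>sets borel.
       measure M' {\<omega>\<in>space M'. Y' \<omega> = y \<and> A' \<omega> = a \<and> X3 \<omega> \<in> B}
         = (\<integral>\<omega>. indicator {\<omega>\<in>space M'. A' \<omega> = a \<and> X3 \<omega> \<in> B} \<omega>
                   * (1 / (1 + exp (-2 * y * X3 \<omega>))) \<partial>M')"
  shows
    "distr M borel (\<lambda>\<omega>. (Y \<omega>, A \<omega>, X1 \<omega> + X2 \<omega>, X2 \<omega>))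
       = distr M' borel (\<lambda>\<omega>. (Y' \<omega>, A' \<omega>, X3 \<omega>, X3 \<omega> - A' \<omega>))
     \<and> opt_unconstrained_score M Y (\<lambda>\<omega>. ((X1 \<omega>, X2 \<omega>), A \<omega>)) (\<lambda>\<omega>. X1 \<omega> + X2 \<omega>)
     \<and> opt_eo_score M Y A (\<lambda>\<omega>. ((X1 \<omega>, X2 \<omega>), A \<omega>)) X2
     \<and> opt_unconstrained_score M' Y' (\<lambda>\<omega>. (X3 \<omega>, A' \<omega>)) X3
     \<and> opt_eo_score M' Y' A' (\<lambda>\<omega>. (X3 \<omega>, A' \<omega>)) (\<lambda>\<omega>. X3 \<omega> - A' \<omega>)"
proof -
  let ?Z' = "\<lambda>\<omega>. X3 \<omega> - A' \<omega>"
  have m1: "gauss_label_model M Y A X2"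
    by (rule scenario1_gauss_label_model[OF P1 meas1 vals1 A1 YA1 N1 indN X2])
  have m2: "gauss_label_model M' Y' A' ?Z'"
    by (rule scenario2_gauss_label_model[OF P2 meas2 vals2 A2 X3A YX3])
  have "distr M borel (\<lambda>\<omega>. (Y \<omega>, A \<omega>, X1 \<omega> + X2 \<omega>, X2 \<omega>))
      = distr M borel (\<lambda>\<omega>. (\<lambda>(y, a, z). (y, a, a + z, z)) (Y \<omega>, A \<omega>, X2 \<omega>))"
    using X1 by (intro distr_cong) auto
  also have "\<dots> = distr M' borel (\<lambda>\<omega>. (\<lambda>(y, a, z). (y, a, a + z, z)) (Y' \<omega>, A' \<omega>, ?Z' \<omega>))"
    by (rule distr_eq_of_gauss_label_models[OF m1 m2]) (simp add: borel_prod[symmetric])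
  finally have distr_eq: "distr M borel (\<lambda>\<omega>. (Y \<omega>, A \<omega>, X1 \<omega> + X2 \<omega>, X2 \<omega>))
      = distr M' borel (\<lambda>\<omega>. (Y' \<omega>, A' \<omega>, X3 \<omega>, ?Z' \<omega>))"
    by simp
  have feat1: "(\<lambda>(a::real, z::real). ((a, z), a)) \<in> borel_measurable borel"
    and feat2: "(\<lambda>(a::real, z::real). (a + z, a)) \<in> borel_measurable borel"
    unfolding case_prod_beta'
    by (intro borel_measurable_continuous_onI continuous_on_Pair continuous_on_add continuous_on_fst
        continuous_on_snd continuous_on_id)+
  show ?thesis
    using distr_eq X1
      gauss_label_model.opt_unconstrained_score_sum[OF m1 feat1, of _ "\<lambda>\<omega>. X1 \<omega> + X2 \<omega>"]
      gauss_label_model.opt_eo_score_Z[OF m1 feat1]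
      gauss_label_model.opt_unconstrained_score_sum[OF m2 feat2, of _ X3]
      gauss_label_model.opt_eo_score_Z[OF m2 feat2]
    by simp
qed

end
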